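(* Let $p$ be an odd prime, $R=F_p+vF_p$ with $v^2=v$, $\theta=\lambda+v\mu$ ($\lambda,\mu\in F_p$) a unit of $R$, and let $C=vC_{1-v}\oplus(1-v)C_v$ be a $\theta$-constacyclic code of length $n$ over $R$. Suppose $C=\langle vh_1(x),(1-v)h_2(x)\rangle$ in $R[x]/\langle x^n-\theta\rangle$, where $h_1(x),h_2(x)\in F_p[x]$ are monic with $h_1(x)\mid x^n-(\lambda+\mu)$ and $h_2(x)\mid x^n-\lambda$. Then $C_{1-v}=[h_1(x)]$ and $C_v=[h_2(x)]$; that is, $h_1(x)$ and $h_2(x)$ are the generator polynomials of the constacyclic codes $C_{1-v}$ and $C_v$, respectively.
   Context: A $\theta$-constacyclic code of length $n$ over $R$ is an $R$-submodule of $R^n$ closed under $(c_0,\dots,c_{n-1})\mapsto(\theta c_{n-1},c_0,\dots,c_{n-2})$, identified with an ideal of $R[x]/\langle x^n-\theta\rangle$ via $(c_i)\mapsto\sum c_ix^i$; $\langle\cdot\rangle$ denotes the generated ideal. $C_v=\{b\in F_p^n : va+(1-v)b\in C\text{ for some }a\in F_p^n\}$, $C_{1-v}=\{a\in F_p^n : va+(1-v)b\in C\text{ for some }b\in F_p^n\}$. For a monic divisor $g(x)$ of $x^n-\alpha$ ($\alpha\in F_p^*$), $[g(x)]$ denotes the ideal of $F_p[x]/\langle x^n-\alpha\rangle$ generated by $g(x)$; the generator polynomial of an $\alpha$-constacyclic code over $F_p$ is the unique monic divisor $g$ of $x^n-\alpha$ with the code equal to $[g(x)]$. *)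

theory Defs
  imports "HOL-Computational_Algebra.Polynomial" "HOL-Computational_Algebra.Primes" "HOL-Library.Cardinality"
begin

text \<open>VR a b represents the element a + v b.\<close>
datatype 'a vring = VR (vr0: 'a) (vr1: 'a)

instantiation vring :: (comm_ring_1) comm_ring_1
begin
definition "0 = VR 0 0"
definition "1 = VR 1 0"
definition "x + y = VR (vr0 x + vr0 y) (vr1 x + vr1 y)"
definition "x - y = VR (vr0 x - vr0 y) (vr1 x - vr1 y)"
definition "- x = VR (- vr0 x) (- vr1 x)"
definition "x * y = VR (vr0 x * vr0 y) (vr0 x * vr1 y + vr1 x * vr0 y + vr1 x * vr1 y)"
instance
  by standard (auto simp: zero_vring_def one_vring_def plus_vring_def minus_vring_def
      uminus_vring_def times_vring_def algebra_simps intro: vring.expand)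
end

definition vv :: "'a::comm_ring_1 vring" where "vv = VR 0 1"
definition emb :: "'a::comm_ring_1 \<Rightarrow> 'a vring" where "emb a = VR a 0"

definition lift :: "'a::comm_ring_1 poly \<Rightarrow> 'a vring poly" where
  "lift f = map_poly emb f"

definition cshift :: "nat \<Rightarrow> 'b::comm_ring_1 \<Rightarrow> 'b poly \<Rightarrow> 'b poly" where
  "cshift n th c = monom (th * coeff c (n - 1)) 0 + (\<Sum>i<n - 1. monom (coeff c i) (Suc i))"

text \<open>A th-constacyclic code of length n over the ring 'b: a submodule of 'b^n
  (words = polynomials of degree < n) closed under the constacyclic shift.\<close>
definition constacyclic_code :: "nat \<Rightarrow> 'b::comm_ring_1 \<Rightarrow> 'b poly set \<Rightarrow> bool" where
  "constacyclic_code n th C \<longleftrightarrow>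
     C \<subseteq> {c. degree c < n} \<and> 0 \<in> C \<and>
     (\<forall>c\<in>C. \<forall>d\<in>C. c + d \<in> C) \<and>
     (\<forall>r. \<forall>c\<in>C. smult r c \<in> C) \<and>
     (\<forall>c\<in>C. cshift n th c \<in> C)"

text \<open>The ideal generated by g1, g2 in 'b[x]/<x^n - th>, represented by the
  residues of degree < n.\<close>
definition ideal2 :: "nat \<Rightarrow> 'b::comm_ring_1 \<Rightarrow> 'b poly \<Rightarrow> 'b poly \<Rightarrow> 'b poly set" where
  "ideal2 n th g1 g2 = {c. degree c < n \<and>
     (\<exists>f g q. c = f * g1 + g * g2 + q * (monom 1 n - [:th:]))}"

definition gen_ideal :: "nat \<Rightarrow> 'a::comm_ring_1 \<Rightarrow> 'a poly \<Rightarrow> 'a poly set" where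
  "gen_ideal n alpha g = {c. degree c < n \<and>
     (\<exists>f q. c = f * g + q * (monom 1 n - [:alpha:]))}"

definition C_v :: "nat \<Rightarrow> 'a::comm_ring_1 vring poly set \<Rightarrow> 'a poly set" where
  "C_v n C = {b. degree b < n \<and> (\<exists>a. degree a < n \<and>
      smult vv (lift a) + smult (1 - vv) (lift b) \<in> C)}"

definition C_1v :: "nat \<Rightarrow> 'a::comm_ring_1 vring poly set \<Rightarrow> 'a poly set" where
  "C_1v n C = {a. degree a < n \<and> (\<exists>b. degree b < n \<and>
      smult vv (lift a) + smult (1 - vv) (lift b) \<in> C)}"

end

theory Submission
  imports Defs
begin

text \<open>Evaluating v at the idempotents 1 and 0 gives ring homomorphisms R \<rightarrow> F_p which,
  applied coefficientwise, send v a + (1 - v) b to a and to b and map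
  C = <v h1, (1 - v) h2> into [h1] modulo x^n - (lam + mu) and into [h2] modulo x^n - lam.
  Conversely v th = v (lam + mu) and (1 - v) th = (1 - v) lam, so multiplying
  a = f h1 + q (x^n - (lam + mu)) by v exhibits v a as an element of C, and likewise for
  (1 - v) b. Only this description of C (and n > 0) is used; the remaining hypotheses
  describe the setting of the paper.\<close>

locale comm_ring_hom =
  fixes f :: "'a::comm_ring_1 \<Rightarrow> 'b::comm_ring_1"
  assumes hom_1: "f 1 = 1"
    and hom_add: "f (x + y) = f x + f y"
    and hom_mult: "f (x * y) = f x * f y"
begin

lemma hom_0: "f 0 = 0"
  using hom_add[of 0 0] by simp

lemma hom_diff: "f (x - y) = f x - f y"
  using hom_add[of "x - y" y] by simp

lemma map_poly_add: "map_poly f (p + q) = map_poly f p + map_poly f q"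
  by (rule poly_eqI) (simp add: coeff_map_poly hom_0 hom_add)

lemma map_poly_diff: "map_poly f (p - q) = map_poly f p - map_poly f q"
  by (rule poly_eqI) (simp add: coeff_map_poly hom_0 hom_diff)

lemma map_poly_mult: "map_poly f (p * q) = map_poly f p * map_poly f q"
proof (rule poly_eqI)
  fix n
  have "f (\<Sum>i\<le>n. coeff p i * coeff q (n - i)) = (\<Sum>i\<le>n. f (coeff p i) * f (coeff q (n - i)))"
    using sum_comp_morphism[of f "\<lambda>i. coeff p i * coeff q (n - i)" "{..n}"]
    by (simp add: hom_0 hom_add hom_mult o_def)
  then show "coeff (map_poly f (p * q)) n = coeff (map_poly f p * map_poly f q) n"
    by (simp add: coeff_map_poly coeff_mult hom_0)
qed

lemma map_poly_hom_smult: "map_poly f (smult c p) = smult (f c) (map_poly f p)"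
  by (intro map_poly_smult) (simp_all add: hom_0 hom_mult)

lemma map_poly_xn_minus_const: "map_poly f (monom 1 n - [:c:]) = monom 1 n - [:f c:]"
  by (simp add: map_poly_diff map_poly_monom map_poly_pCons hom_0 hom_1)

lemma map_poly_mem_ideal2:
  assumes "c \<in> ideal2 n th g1 g2"
  shows "map_poly f c \<in> ideal2 n (f th) (map_poly f g1) (map_poly f g2)"
proof -
  obtain u w q where deg: "degree c < n" and c: "c = u * g1 + w * g2 + q * (monom 1 n - [:th:])"
    using assms unfolding ideal2_def by blast
  have "map_poly f c = map_poly f u * map_poly f g1 + map_poly f w * map_poly f g2
      + map_poly f q * (monom 1 n - [:f th:])"
    by (simp add: c map_poly_add map_poly_mult map_poly_xn_minus_const)
  moreover have "degree (map_poly f c) < n"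
    using deg map_poly_degree_leq[of f c] by linarith
  ultimately show ?thesis
    unfolding ideal2_def by blast
qed

end

lemma ideal2_commute: "ideal2 n th g1 g2 = ideal2 n th g2 g1"
  unfolding ideal2_def by (metis (no_types, opaque_lifting) add.commute)

lemma ideal2_0_right: "ideal2 n th g 0 = gen_ideal n th g"
  unfolding ideal2_def gen_ideal_def by auto

definition vr_eval :: "'a::comm_ring_1 \<Rightarrow> 'a vring \<Rightarrow> 'a" where
  "vr_eval e x = vr0 x + e * vr1 x"

lemma comm_ring_hom_vr_eval:
  assumes "e * e = e"
  shows "comm_ring_hom (vr_eval e)"
proof
  fix x y :: "'a vring"
  show "vr_eval e (x * y) = vr_eval e x * vr_eval e y"
    using assms by (simp add: vr_eval_def times_vring_def algebra_simps)
       (metis mult.assoc mult.left_commute)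
qed (simp_all add: vr_eval_def one_vring_def plus_vring_def algebra_simps)

lemma comm_ring_hom_emb: "comm_ring_hom emb"
  by standard (simp_all add: emb_def one_vring_def plus_vring_def times_vring_def)

lemma vr_eval_VR [simp]: "vr_eval e (VR a b) = a + e * b"
  by (simp add: vr_eval_def)

lemma vr_eval_vv [simp]: "vr_eval e vv = e"
  by (simp add: vr_eval_def vv_def)

lemma vr_eval_one_minus_vv [simp]: "vr_eval e (1 - vv) = 1 - e"
  by (simp add: vr_eval_def vv_def one_vring_def minus_vring_def)

lemma map_poly_vr_eval_lift [simp]: "map_poly (vr_eval e) (lift a) = a"
  by (rule poly_eqI) (simp add: lift_def coeff_map_poly vr_eval_def emb_def zero_vring_def)

lemma smult_lift_mem_ideal2:
  assumes "a \<in> gen_ideal n \<alpha> h" and "u * th = u * emb \<alpha>"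
  shows "smult u (lift a) \<in> ideal2 n th (smult u (lift h)) g"
proof -
  interpret comm_ring_hom emb by (rule comm_ring_hom_emb)
  obtain f q where deg: "degree a < n" and a: "a = f * h + q * (monom 1 n - [:\<alpha>:])"
    using assms(1) unfolding gen_ideal_def by blast
  have "smult u (monom 1 n - [:emb \<alpha>:]) = smult u (monom 1 n - [:th:])"
    by (simp add: smult_diff_right assms(2))
  then have "smult u (lift a) = lift f * smult u (lift h) + 0 * g
      + smult u (lift q) * (monom 1 n - [:th:])"
    by (simp add: a lift_def map_poly_add map_poly_mult map_poly_xn_minus_const
        smult_add_right mult_smult_left flip: mult_smult_right)
  moreover have "degree (smult u (lift a)) < n"
    using deg degree_smult_le[of u "lift a"] map_poly_degree_leq[of emb a]
    unfolding lift_def by linarith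
  ultimately show ?thesis
    unfolding ideal2_def by blast
qed

lemma C_1v_eq_gen_ideal:
  assumes "n > 0" and C: "C = ideal2 n (VR lam mu) (smult vv (lift h1)) (smult (1 - vv) (lift h2))"
  shows "C_1v n C = gen_ideal n (lam + mu) h1"
proof (intro set_eqI iffI)
  fix a assume "a \<in> C_1v n C"
  then obtain b where "smult vv (lift a) + smult (1 - vv) (lift b) \<in> C" (is "?w \<in> C")
    unfolding C_1v_def by blast
  interpret ev: comm_ring_hom "vr_eval 1 :: 'a vring \<Rightarrow> 'a"
    by (rule comm_ring_hom_vr_eval) simp
  have "map_poly (vr_eval 1) ?w \<in> ideal2 n (lam + mu) h1 0"
    using ev.map_poly_mem_ideal2[OF \<open>?w \<in> C\<close>[unfolded C]]
    by (simp add: ev.map_poly_hom_smult)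
  moreover have "map_poly (vr_eval 1) ?w = a"
    by (simp add: ev.map_poly_add ev.map_poly_hom_smult)
  ultimately show "a \<in> gen_ideal n (lam + mu) h1"
    by (simp add: ideal2_0_right)
next
  fix a assume a: "a \<in> gen_ideal n (lam + mu) h1"
  have "vv * VR lam mu = vv * emb (lam + mu)"
    by (simp add: vv_def emb_def times_vring_def)
  with a have "smult vv (lift a) \<in> C"
    unfolding C by (rule smult_lift_mem_ideal2)
  then have "smult vv (lift a) + smult (1 - vv) (lift 0) \<in> C"
    by (simp add: lift_def)
  moreover have "degree a < n" "degree (0 :: 'a poly) < n"
    using a \<open>n > 0\<close> by (simp_all add: gen_ideal_def)
  ultimately show "a \<in> C_1v n C"
    unfolding C_1v_def by (intro CollectI conjI exI[of _ 0])
qed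

lemma C_v_eq_gen_ideal:
  assumes "n > 0" and C: "C = ideal2 n (VR lam mu) (smult vv (lift h1)) (smult (1 - vv) (lift h2))"
  shows "C_v n C = gen_ideal n lam h2"
proof (intro set_eqI iffI)
  fix b assume "b \<in> C_v n C"
  then obtain a where "smult vv (lift a) + smult (1 - vv) (lift b) \<in> C" (is "?w \<in> C")
    unfolding C_v_def by blast
  interpret ev: comm_ring_hom "vr_eval 0 :: 'a vring \<Rightarrow> 'a"
    by (rule comm_ring_hom_vr_eval) simp
  have "map_poly (vr_eval 0) ?w \<in> ideal2 n lam 0 h2"
    using ev.map_poly_mem_ideal2[OF \<open>?w \<in> C\<close>[unfolded C]]
    by (simp add: ev.map_poly_hom_smult)
  moreover have "map_poly (vr_eval 0) ?w = b"
    by (simp add: ev.map_poly_add ev.map_poly_hom_smult)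
  ultimately show "b \<in> gen_ideal n lam h2"
    by (simp add: ideal2_commute[of n lam 0] ideal2_0_right)
next
  fix b assume b: "b \<in> gen_ideal n lam h2"
  have "(1 - vv) * VR lam mu = (1 - vv) * emb lam"
    by (simp add: vv_def emb_def times_vring_def one_vring_def minus_vring_def)
  with b have "smult (1 - vv) (lift b) \<in> C"
    unfolding C ideal2_commute[of n _ "smult vv (lift h1)"] by (rule smult_lift_mem_ideal2)
  then have "smult vv (lift 0) + smult (1 - vv) (lift b) \<in> C"
    by (simp add: lift_def)
  moreover have "degree b < n" "degree (0 :: 'a poly) < n"
    using b \<open>n > 0\<close> by (simp_all add: gen_ideal_def)
  ultimately show "b \<in> C_v n C"
    unfolding C_v_def by (intro CollectI conjI exI[of _ 0])
qed

theorem theorem3p5: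
  fixes p n :: nat and lam mu :: "'a::{finite,field}" and th :: "'a vring"
    and C :: "'a vring poly set" and h1 h2 :: "'a poly"
  assumes "prime p" and "odd p" and "CARD('a) = p"
    and "n > 0"
    and "th = emb lam + vv * emb mu" and "th dvd 1"
    and "constacyclic_code n th C"
    and "C = {smult vv (lift a) + smult (1 - vv) (lift b) | a b. a \<in> C_1v n C \<and> b \<in> C_v n C}"
    and "C = ideal2 n th (smult vv (lift h1)) (smult (1 - vv) (lift h2))"
    and "lead_coeff h1 = 1" and "h1 dvd (monom 1 n - [:lam + mu:])"
    and "lead_coeff h2 = 1" and "h2 dvd (monom 1 n - [:lam:])"
  shows "C_1v n C = gen_ideal n (lam + mu) h1 \<and> C_v n C = gen_ideal n lam h2"
proof -
  have "th = VR lam mu"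
    using assms(5) by (simp add: emb_def vv_def times_vring_def plus_vring_def)
  with assms(9) have C: "C = ideal2 n (VR lam mu) (smult vv (lift h1)) (smult (1 - vv) (lift h2))"
    by simp
  show ?thesis
    using C_1v_eq_gen_ideal[OF assms(4) C] C_v_eq_gen_ideal[OF assms(4) C] ..
qed

end
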